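(* Let $\alpha,\beta\in\mathbb R_\flat$ with $\alpha<\beta$. Then $\ell_\alpha(\mathbb N_0^d)\subseteq\ell_\beta(\mathbb N_0^d)$ and $\ell_{0,\alpha}(\mathbb N_0^d)\subseteq\ell_{0,\beta}(\mathbb N_0^d)$.
   Context: $\mathbb R_\flat=\mathbb R_+\cup\{\flat_\sigma:\sigma>0\}$, $\mathbb R_+=(0,\infty)$, ordered by the usual order on $\mathbb R_+$ together with: $x_1<\flat_{\sigma_1}<\flat_{\sigma_2}<x_2$ whenever $\sigma_1<\sigma_2$ and $x_1<1/2\le x_2$, $x_1,x_2\in\mathbb R_+$. For $n\in\mathbb N_0^d$, $|n|=\sum n_j$, $n!=\prod n_j!$. Weights: for $\alpha\in\mathbb R_+$, $h>0$, $\vartheta_{h,\alpha}(n)=e^{h|n|^{1/(2\alpha)}}$; for $\alpha=\flat_\sigma$, $\vartheta_{h,\flat_\sigma}(n)=h^{|n|}n!^{1/(2\sigma)}$. $\ell^\infty_{[\vartheta_{h,\alpha}]}(\mathbb N_0^d)$ is the space of complex sequences with $\sup_n|a_n|\vartheta_{h,\alpha}(n)<\infty$; $\ell_\alpha(\mathbb N_0^d)=\bigcup_{h>0}\ell^\infty_{[\vartheta_{h,\alpha}]}(\mathbb N_0^d)$ and $\ell_{0,\alpha}(\mathbb N_0^d)=\bigcap_{h>0}\ell^\infty_{[\vartheta_{h,\alpha}]}(\mathbb N_0^d)$, for every $\alpha\in\mathbb R_\flat$. *)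

theory Defs
  imports Complex_Main
begin

text \<open>The extended index set R_flat = R_+ union {flat_sigma : sigma > 0}.
  Pos x stands for x in R_+, Flat s stands for flat_s.  Validity (x > 0, s > 0)
  is a separate predicate.\<close>
datatype rflat = Pos real | Flat real

definition rflat_valid :: "rflat \<Rightarrow> bool" where
  "rflat_valid a = (case a of Pos x \<Rightarrow> x > 0 | Flat s \<Rightarrow> s > 0)"

fun rflat_less :: "rflat \<Rightarrow> rflat \<Rightarrow> bool" where
  "rflat_less (Pos x) (Pos y) = (x < y)"
| "rflat_less (Pos x) (Flat s) = (x < 1/2)"
| "rflat_less (Flat s) (Pos x) = (1/2 \<le> x)"
| "rflat_less (Flat s) (Flat t) = (s < t)"

text \<open>Multi-indices n in N_0^d are functions 'd \<Rightarrow> nat on a finite index type 'd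
  with CARD('d) = d.\<close>
definition mabs :: "('d::finite \<Rightarrow> nat) \<Rightarrow> nat" where
  "mabs n = (\<Sum>j\<in>UNIV. n j)"

definition mfact :: "('d::finite \<Rightarrow> nat) \<Rightarrow> nat" where
  "mfact n = (\<Prod>j\<in>UNIV. fact (n j))"

definition weight :: "real \<Rightarrow> rflat \<Rightarrow> ('d::finite \<Rightarrow> nat) \<Rightarrow> real" where
  "weight h a n = (case a of
      Pos x \<Rightarrow> exp (h * real (mabs n) powr (1 / (2 * x)))
    | Flat s \<Rightarrow> h ^ mabs n * real (mfact n) powr (1 / (2 * s)))"

definition linf_weighted :: "(('d::finite \<Rightarrow> nat) \<Rightarrow> real) \<Rightarrow> (('d \<Rightarrow> nat) \<Rightarrow> complex) set" where
  "linf_weighted w = {a. \<exists>C. \<forall>n. norm (a n) * w n \<le> C}"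

definition ell :: "rflat \<Rightarrow> (('d::finite \<Rightarrow> nat) \<Rightarrow> complex) set" where
  "ell a = (\<Union>h\<in>{h. h > 0}. linf_weighted (weight h a))"

definition ell0 :: "rflat \<Rightarrow> (('d::finite \<Rightarrow> nat) \<Rightarrow> complex) set" where
  "ell0 a = (\<Inter>h\<in>{h. h > 0}. linf_weighted (weight h a))"

end

theory Submission
  imports Defs
begin

text \<open>Both inclusions follow once \<open>\<vartheta>_{h,\<beta>} \<le> K \<vartheta>_{h,\<alpha>}\<close> for every \<open>h > 0\<close>: then each
  weighted \<open>\<ell>\<^sup>\<infinity>\<close> space for \<open>\<alpha>\<close> lies in the one for \<open>\<beta>\<close> with the same \<open>h\<close>.
  Within \<open>\<real>\<^sub>+\<close> and within the flat part this is monotonicity of powers. The mixed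
  comparisons, for \<open>x < 1/2 \<le> y\<close>, are growth estimates. On one side
  \<open>h^|n| n!^(1/(2\<sigma>)) \<le> h^|n| |n|^(|n|/(2\<sigma>)) = exp (O (|n| log |n|))\<close>, which is
  dominated by \<open>exp (h |n|^(1/(2x)))\<close> since \<open>1/(2x) > 1\<close>. On the other side
  \<open>exp (h |n|^(1/(2y))) \<le> e^h (e^h)^|n|\<close> since \<open>1/(2y) \<le> 1\<close>, and every geometric
  sequence \<open>c^k\<close> is bounded by a multiple of \<open>k!^r\<close>.\<close>

lemma power_div_fact_le_exp:
  fixes x :: real
  assumes "0 \<le> x"
  shows "x ^ k / fact k \<le> exp x"
proof -
  have sums: "(\<lambda>n. x ^ n / fact n) sums exp x"
    using exp_converges[of x] by (simp add: divide_inverse mult.commute)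
  have "(\<Sum>n\<in>{k}. x ^ n / fact n) \<le> (\<Sum>n. x ^ n / fact n)"
    by (rule sum_le_suminf) (use sums assms in \<open>auto simp: sums_iff\<close>)
  with sums show ?thesis
    by (simp add: sums_iff)
qed

lemma power_le_const_mult_fact_powr:
  fixes c r :: real
  assumes "0 < c" "0 < r"
  shows "\<exists>K\<ge>0. \<forall>k. c ^ k \<le> K * fact k powr r"
proof (intro exI[of _ "exp (c powr (1 / r)) powr r"] conjI allI)
  fix k
  define b where "b = c powr (1 / r)"
  have "0 < b"
    using assms by (simp add: b_def)
  have "c ^ k = (b ^ k) powr r"
    using assms \<open>0 < b\<close> by (simp add: b_def powr_realpow[symmetric] powr_powr mult.commute)
  also have "\<dots> \<le> (exp b * fact k) powr r"
    using power_div_fact_le_exp[of b k] \<open>0 < b\<close> assms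
    by (intro powr_mono2) (auto simp: divide_simps)
  finally show "c ^ k \<le> exp (c powr (1 / r)) powr r * fact k powr r"
    by (simp add: b_def powr_mult)
qed simp

lemma power_mabs_le_const_mult_mfact_powr:
  fixes c r :: real
  assumes "0 < c" "0 < r"
  shows "\<exists>K\<ge>0. \<forall>n::'d::finite \<Rightarrow> nat. c ^ mabs n \<le> K * real (mfact n) powr r"
proof -
  obtain K where K: "K \<ge> 0" "\<And>k. c ^ k \<le> K * fact k powr r"
    using power_le_const_mult_fact_powr[OF assms] by blast
  show ?thesis
  proof (intro exI[of _ "K ^ card (UNIV :: 'd set)"] conjI allI)
    fix n :: "'d \<Rightarrow> nat"
    have "c ^ mabs n = (\<Prod>j\<in>UNIV. c ^ n j)"
      by (simp add: mabs_def power_sum)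
    also have "\<dots> \<le> (\<Prod>j\<in>UNIV. K * fact (n j) powr r)"
      using K assms by (intro prod_mono) auto
    also have "\<dots> = K ^ card (UNIV :: 'd set) * real (mfact n) powr r"
      by (simp add: prod.distrib mfact_def prod_powr_distrib of_nat_prod)
    finally show "c ^ mabs n \<le> K ^ card (UNIV :: 'd set) * real (mfact n) powr r" .
  qed (use K in simp)
qed

lemma mfact_le_mabs_power: "mfact n \<le> mabs n ^ mabs n"
proof -
  have "mfact n \<le> (\<Prod>j\<in>UNIV. n j ^ n j)"
    unfolding mfact_def using fact_le_power[where 'a = nat] by (intro prod_mono) auto
  also have "\<dots> \<le> (\<Prod>j\<in>UNIV. mabs n ^ n j)"
    unfolding mabs_def by (intro prod_mono conjI power_mono member_le_sum) auto
  also have "\<dots> = mabs n ^ mabs n"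
    by (simp add: mabs_def power_sum)
  finally show ?thesis .
qed

lemma mfact_ge_1: "1 \<le> mfact n"
  unfolding mfact_def by (metis fact_ge_1 prod_ge_1)

lemma const_mult_powr_le_const_plus_powr:
  fixes A a p \<epsilon> :: real
  assumes "0 \<le> A" "0 < a" "a < p" "0 < \<epsilon>"
  shows "\<exists>C\<ge>0. \<forall>y\<ge>0. A * y powr a \<le> C + \<epsilon> * y powr p"
proof -
  define M where "M = (A / \<epsilon>) powr (1 / (p - a))"
  have "M \<ge> 0"
    by (simp add: M_def)
  have M_powr: "M powr (p - a) = A / \<epsilon>"
    using assms by (simp add: M_def powr_powr)
  show ?thesis
  proof (intro exI[of _ "A * M powr a"] conjI allI impI)
    fix y :: real
    assume "y \<ge> 0"
    show "A * y powr a \<le> A * M powr a + \<epsilon> * y powr p"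
    proof (cases "y \<le> M")
      case True
      then have "A * y powr a \<le> A * M powr a"
        using assms \<open>y \<ge> 0\<close> by (intro mult_left_mono powr_mono2) auto
      moreover have "\<epsilon> * y powr p \<ge> 0"
        using assms by simp
      ultimately show ?thesis by linarith
    next
      case False
      then have "M powr (p - a) \<le> y powr (p - a)"
        using assms \<open>M \<ge> 0\<close> by (intro powr_mono2) auto
      then have "A \<le> \<epsilon> * y powr (p - a)"
        using M_powr assms by (simp add: field_simps)
      then have "A * y powr a \<le> \<epsilon> * y powr (p - a) * y powr a"
        by (intro mult_right_mono) auto
      also have "\<dots> = \<epsilon> * y powr p"
        by (simp add: mult.assoc powr_add[symmetric])
      finally have "A * y powr a \<le> \<epsilon> * y powr p" .
      moreover have "0 \<le> A * M powr a"
        using assms by simp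
      ultimately show ?thesis
        by linarith
    qed
  qed (use assms in simp)
qed

lemma power_mult_self_power_powr_le_exp_powr:
  fixes h \<epsilon> r p :: real
  assumes "0 < h" "0 < \<epsilon>" "0 < r" "1 < p"
  shows "\<exists>K\<ge>0. \<forall>m::nat. h ^ m * real (m ^ m) powr r \<le> K * exp (\<epsilon> * real m powr p)"
proof -
  define e where "e = (p - 1) / 2"
  \<comment> \<open>any \<open>1 < 1 + e < p\<close> works: \<open>m^(1+e)\<close> absorbs \<open>m ln m\<close> and is absorbed by \<open>\<epsilon> m^p\<close>\<close>
  define A where "A = \<bar>ln h\<bar> + r / e"
  have "0 < e" "1 + e < p"
    using assms by (simp_all add: e_def field_simps)
  moreover from this have "0 \<le> A" "0 < 1 + e"
    using assms by (simp_all add: A_def)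
  ultimately obtain C where C: "\<And>y. y \<ge> 0 \<Longrightarrow> A * y powr (1 + e) \<le> C + \<epsilon> * y powr p"
    using const_mult_powr_le_const_plus_powr[of A "1 + e" p \<epsilon>] assms by blast
  have log_bound: "m * ln h + r * (m * ln m) \<le> A * real m powr (1 + e)" for m :: nat
  proof (cases "m = 0")
    case False
    then have "1 \<le> real m"
      by simp
    have "real m \<le> real m powr (1 + e)"
      using powr_mono[of 1 "1 + e" "real m"] \<open>1 \<le> real m\<close> \<open>0 < e\<close> by simp
    then have linear_part: "m * ln h \<le> \<bar>ln h\<bar> * real m powr (1 + e)"
      by (metis abs_ge_self abs_ge_zero mult.commute mult_mono of_nat_0_le_iff)
    have "m * ln m \<le> m * (real m powr e / e)"
      using ln_powr_bound[OF \<open>1 \<le> real m\<close> \<open>0 < e\<close>] by (intro mult_left_mono) auto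
    then have "r * (m * ln m) \<le> r * (m * (real m powr e / e))"
      using assms(3) by (metis less_eq_real_def mult_left_mono)
    also have "\<dots> = r / e * real m powr (1 + e)"
      using \<open>1 \<le> real m\<close> by (simp add: powr_add)
    finally show ?thesis
      using linear_part by (simp add: A_def algebra_simps)
  qed simp
  show ?thesis
  proof (intro exI[of _ "exp C"] conjI allI)
    fix m :: nat
    have "h ^ m * real (m ^ m) powr r = exp (m * ln h + r * (m * ln m))"
      using assms by (cases "m = 0") (simp_all add: exp_add exp_of_nat_mult powr_def ln_realpow)
    also have "\<dots> \<le> exp (C + \<epsilon> * real m powr p)"
      using log_bound[of m] C[of m] by simp
    finally show "h ^ m * real (m ^ m) powr r \<le> exp C * exp (\<epsilon> * real m powr p)"
      by (simp add: exp_add)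
  qed simp
qed

definition weight_dominated :: "('a \<Rightarrow> real) \<Rightarrow> ('a \<Rightarrow> real) \<Rightarrow> bool" where
  "weight_dominated v w \<longleftrightarrow> (\<exists>K\<ge>0. \<forall>n. v n \<le> K * w n)"

lemma linf_weighted_mono:
  assumes "weight_dominated v w"
  shows "linf_weighted w \<subseteq> linf_weighted v"
proof
  fix a
  assume "a \<in> linf_weighted w"
  then obtain C where C: "\<And>n. norm (a n) * w n \<le> C"
    by (auto simp: linf_weighted_def)
  obtain K where K: "K \<ge> 0" "\<And>n. v n \<le> K * w n"
    using assms by (auto simp: weight_dominated_def)
  have "norm (a n) * v n \<le> K * C" for n
  proof -
    have "norm (a n) * v n \<le> norm (a n) * (K * w n)"
      using K(2) by (intro mult_left_mono) auto
    also have "\<dots> = K * (norm (a n) * w n)"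
      by simp
    also have "\<dots> \<le> K * C"
      using C K(1) by (intro mult_left_mono)
    finally show ?thesis .
  qed
  then show "a \<in> linf_weighted v"
    by (auto simp: linf_weighted_def)
qed

lemma weight_Pos_dominated:
  assumes "0 < x" "x \<le> y" "0 \<le> h"
  shows "weight_dominated (weight h (Pos y) :: ('d::finite \<Rightarrow> nat) \<Rightarrow> real) (weight h (Pos x))"
  unfolding weight_dominated_def
proof (intro exI[of _ 1] conjI allI)
  fix n :: "'d \<Rightarrow> nat"
  have "real (mabs n) powr (1 / (2 * y)) \<le> real (mabs n) powr (1 / (2 * x))"
    using assms by (cases "mabs n = 0") (auto intro!: powr_mono simp: field_simps)
  then show "weight h (Pos y) n \<le> 1 * weight h (Pos x) n"
    using assms by (simp add: weight_def mult_left_mono)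
qed simp

lemma weight_Flat_dominated:
  assumes "0 < s" "s \<le> t" "0 \<le> h"
  shows "weight_dominated (weight h (Flat t) :: ('d::finite \<Rightarrow> nat) \<Rightarrow> real) (weight h (Flat s))"
  unfolding weight_dominated_def
proof (intro exI[of _ 1] conjI allI)
  fix n :: "'d \<Rightarrow> nat"
  have "real (mfact n) powr (1 / (2 * t)) \<le> real (mfact n) powr (1 / (2 * s))"
    using assms mfact_ge_1[of n] by (intro powr_mono) (auto simp: field_simps)
  then show "weight h (Flat t) n \<le> 1 * weight h (Flat s) n"
    using assms by (simp add: weight_def mult_left_mono)
qed simp

lemma weight_Flat_dominated_by_Pos:
  assumes "0 < x" "x < 1/2" "0 < s" "0 < h" "0 < h'"
  shows "weight_dominated (weight h (Flat s) :: ('d::finite \<Rightarrow> nat) \<Rightarrow> real) (weight h' (Pos x))"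
proof -
  have "1 < 1 / (2 * x)"
    using assms by (simp add: field_simps)
  then obtain K where K: "K \<ge> 0"
    "\<And>m::nat. h ^ m * real (m ^ m) powr (1 / (2 * s)) \<le> K * exp (h' * real m powr (1 / (2 * x)))"
    using power_mult_self_power_powr_le_exp_powr[of h h' "1 / (2 * s)" "1 / (2 * x)"] assms by auto
  have "weight h (Flat s) n \<le> K * weight h' (Pos x) n" for n :: "'d \<Rightarrow> nat"
  proof -
    have "real (mfact n) powr (1 / (2 * s)) \<le> real (mabs n ^ mabs n) powr (1 / (2 * s))"
      using mfact_ge_1[of n] mfact_le_mabs_power[of n] assms by (intro powr_mono2) auto
    then have "weight h (Flat s) n \<le> h ^ mabs n * real (mabs n ^ mabs n) powr (1 / (2 * s))"
      using assms by (simp add: weight_def mult_left_mono)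
    also have "\<dots> \<le> K * weight h' (Pos x) n"
      using K(2) by (simp add: weight_def)
    finally show ?thesis .
  qed
  with K(1) show ?thesis
    by (auto simp: weight_dominated_def)
qed

lemma weight_Pos_dominated_by_Flat:
  assumes "1/2 \<le> y" "0 < s" "0 < h" "0 < h'"
  shows "weight_dominated (weight h (Pos y) :: ('d::finite \<Rightarrow> nat) \<Rightarrow> real) (weight h' (Flat s))"
proof -
  obtain K where K: "K \<ge> 0"
    "\<And>n::'d \<Rightarrow> nat. (exp h / h') ^ mabs n \<le> K * real (mfact n) powr (1 / (2 * s))"
    using power_mabs_le_const_mult_mfact_powr[of "exp h / h'" "1 / (2 * s)"] assms by auto
  have "weight h (Pos y) n \<le> exp h * K * weight h' (Flat s) n" for n :: "'d \<Rightarrow> nat"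
  proof -
    define m where "m = real (mabs n)"
    have "0 < 1 / (2 * y)" "1 / (2 * y) \<le> 1"
      using assms by (auto simp: field_simps)
    then have "m powr (1 / (2 * y)) \<le> 1 + m"
    proof (cases "mabs n = 0")
      case False
      with \<open>1 / (2 * y) \<le> 1\<close> have "m powr (1 / (2 * y)) \<le> m powr 1"
        by (intro powr_mono) (auto simp: m_def)
      then show ?thesis
        by (simp add: m_def)
    qed (simp add: m_def)
    then have "weight h (Pos y) n \<le> exp (h * (1 + m))"
      using assms by (simp add: weight_def m_def)
    also have "\<dots> = exp h * (h' ^ mabs n * (exp h / h') ^ mabs n)"
      using assms by (simp add: m_def distrib_left exp_add power_divide
          exp_of_nat_mult[symmetric] mult.commute)
    also have "\<dots> \<le> exp h * (h' ^ mabs n * (K * real (mfact n) powr (1 / (2 * s))))"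
      using K(2)[of n] assms by (intro mult_left_mono) auto
    finally show ?thesis
      by (simp add: weight_def mult_ac)
  qed
  with K(1) show ?thesis
    unfolding weight_dominated_def by (intro exI[of _ "exp h * K"]) auto
qed

lemma weight_dominated_if_rflat_less:
  assumes "rflat_valid \<alpha>" "rflat_valid \<beta>" "rflat_less \<alpha> \<beta>" "0 < h"
  shows "weight_dominated (weight h \<beta> :: ('d::finite \<Rightarrow> nat) \<Rightarrow> real) (weight h \<alpha>)"
  using assms
  by (cases \<alpha>; cases \<beta>)
    (auto simp: rflat_valid_def intro: weight_Pos_dominated weight_Flat_dominated
      weight_Flat_dominated_by_Pos weight_Pos_dominated_by_Flat)

theorem lemma6p1:
  assumes "rflat_valid \<alpha>" and "rflat_valid \<beta>" and "rflat_less \<alpha> \<beta>"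
  shows "(ell \<alpha> :: (('d::finite \<Rightarrow> nat) \<Rightarrow> complex) set) \<subseteq> ell \<beta>
     \<and> (ell0 \<alpha> :: (('d::finite \<Rightarrow> nat) \<Rightarrow> complex) set) \<subseteq> ell0 \<beta>"
proof -
  have "linf_weighted (weight h \<alpha>) \<subseteq> linf_weighted (weight h \<beta> :: ('d \<Rightarrow> nat) \<Rightarrow> real)"
    if "0 < h" for h
    using linf_weighted_mono weight_dominated_if_rflat_less[OF assms that] by blast
  then show ?thesis
    unfolding ell_def ell0_def by (intro conjI UN_mono INT_anti_mono) auto
qed

end
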